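(* For every multigraph $G$ and every family $\mathcal{F}$ of multigraphs, $\mathrm{wsat}(G,\mathcal{F})\geq\mathrm{rk}\text{-}\mathrm{sat}(G,\mathcal{F})$.
   Context: A multigraph on vertex set $V$ has as edge set a multiset of pairs from $\binom{V}{2}$; different instances of the same pair are treated as distinct elements. For a multigraph $G$ and a family $\mathcal{F}$ of multigraphs, a spanning submultigraph $H$ of $G$ is weakly $\mathcal{F}$-saturated in $G$ if $G$ can be obtained from $H$ by adding the missing edge instances one at a time so that each added edge instance belongs to a copy (in the current multigraph) of some $F\in\mathcal{F}$. $\mathrm{wsat}(G,\mathcal{F})$ is the minimum number of edges (counted with multiplicity) of a weakly $\mathcal{F}$-saturated submultigraph of $G$. A matroid $M$ on the ground set $E(G)$ (edge instances) is weakly $\mathcal{F}$-saturated if for every $F\in\mathcal{F}$, every copy $\tilde F$ of $F$ in $G$ is a cycle of $M$, i.e. $\mathrm{rk}_M(E(\tilde F)\setminus\{e\})=\mathrm{rk}_M(E(\tilde F))$ for all $e\in E(\tilde F)$. $\mathrm{rk}\text{-}\mathrm{sat}(G,\mathcal{F})$ is the maximum rank of a weakly $\mathcal{F}$-saturated matroid on $E(G)$. *)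

theory Defs
  imports Main
begin

text \<open>Parallel edges are
  distinct edge instances with the same endpoints.\<close>
record ('v, 'e) mgraph =
  verts :: "'v set"
  edges :: "'e set"
  ends  :: "'e \<Rightarrow> 'v set"

definition multigraph :: "('v, 'e) mgraph \<Rightarrow> bool" where
  "multigraph G \<longleftrightarrow> finite (verts G) \<and> finite (edges G) \<and>
     (\<forall>e\<in>edges G. ends G e \<subseteq> verts G \<and> card (ends G e) = 2)"

definition copy_edges :: "('u, 'f) mgraph \<Rightarrow> ('v, 'e) mgraph \<Rightarrow> 'e set \<Rightarrow> bool" where
  "copy_edges F G S \<longleftrightarrow> (\<exists>\<phi> \<psi>. inj_on \<phi> (verts F) \<and> \<phi> ` verts F \<subseteq> verts G \<and>
      inj_on \<psi> (edges F) \<and> \<psi> ` edges F = S \<and> S \<subseteq> edges G \<and>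
      (\<forall>f\<in>edges F. ends G (\<psi> f) = \<phi> ` ends F f))"

text \<open>H (a set of edge instances of G; the spanning submultigraph) is weakly
  F-saturated in G: the missing edge instances can be added one at a time, each
  lying in a copy of some member of the family in the current multigraph.\<close>
definition weakly_sat :: "('v, 'e) mgraph \<Rightarrow> ('u, 'f) mgraph set \<Rightarrow> 'e set \<Rightarrow> bool" where
  "weakly_sat G \<F> H \<longleftrightarrow> H \<subseteq> edges G \<and>
     (\<exists>es. distinct es \<and> set es = edges G - H \<and>
        (\<forall>i<length es. \<exists>F\<in>\<F>. \<exists>S.
            copy_edges F (G\<lparr>edges := H \<union> set (take (Suc i) es)\<rparr>) S \<and> es ! i \<in> S))"

definition wsat :: "('v, 'e) mgraph \<Rightarrow> ('u, 'f) mgraph set \<Rightarrow> nat" where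
  "wsat G \<F> = Min (card ` {H. weakly_sat G \<F> H})"

definition matroid :: "'e set \<Rightarrow> ('e set \<Rightarrow> bool) \<Rightarrow> bool" where
  "matroid E indep \<longleftrightarrow> indep {} \<and>
     (\<forall>X. indep X \<longrightarrow> X \<subseteq> E) \<and>
     (\<forall>X Y. indep Y \<and> X \<subseteq> Y \<longrightarrow> indep X) \<and>
     (\<forall>X Y. indep X \<and> indep Y \<and> card X < card Y \<longrightarrow> (\<exists>y\<in>Y - X. indep (insert y X)))"

definition mrank :: "('e set \<Rightarrow> bool) \<Rightarrow> 'e set \<Rightarrow> nat" where
  "mrank indep X = Max (card ` {I. I \<subseteq> X \<and> indep I})"

definition is_cycle :: "('e set \<Rightarrow> bool) \<Rightarrow> 'e set \<Rightarrow> bool" where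
  "is_cycle indep C \<longleftrightarrow> (\<forall>e\<in>C. mrank indep (C - {e}) = mrank indep C)"

definition weakly_sat_matroid :: "('v, 'e) mgraph \<Rightarrow> ('u, 'f) mgraph set \<Rightarrow> ('e set \<Rightarrow> bool) \<Rightarrow> bool" where
  "weakly_sat_matroid G \<F> indep \<longleftrightarrow> matroid (edges G) indep \<and>
     (\<forall>F\<in>\<F>. \<forall>S. copy_edges F G S \<longrightarrow> is_cycle indep S)"

definition rk_sat :: "('v, 'e) mgraph \<Rightarrow> ('u, 'f) mgraph set \<Rightarrow> nat" where
  "rk_sat G \<F> = Max {mrank indep (edges G) | indep. weakly_sat_matroid G \<F> indep}"

end

theory Submission
  imports Defs
begin

text \<open>Let \<open>H\<close> be weakly \<open>\<F>\<close>-saturated, with the missing edges added in the order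
  \<open>e\<^sub>1, \<dots>, e\<^sub>m\<close>, and let \<open>M\<close> be a weakly \<open>\<F>\<close>-saturated matroid. When \<open>e\<^sub>i\<close> is added it lies in a
  copy of some \<open>F \<in> \<F>\<close> inside \<open>H \<union> {e\<^sub>1, \<dots>, e\<^sub>i}\<close>; that copy is a cycle of \<open>M\<close>, so \<open>e\<^sub>i\<close> is spanned
  by \<open>H \<union> {e\<^sub>1, \<dots>, e\<^sub>i\<^sub>-\<^sub>1}\<close>. Hence the rank never increases along the sequence, and
  \<open>rk(E(G)) = rk(H) \<le> |H|\<close>.\<close>

locale finite_matroid =
  fixes E :: "'e set" and indep :: "'e set \<Rightarrow> bool"
  assumes matroid: "matroid E indep" and finite_ground: "finite E"
begin

lemma indep_empty: "indep {}"
  and indep_subset_ground: "indep X \<Longrightarrow> X \<subseteq> E"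
  and indep_subset: "indep Y \<Longrightarrow> X \<subseteq> Y \<Longrightarrow> indep X"
  and indep_augment: "indep X \<Longrightarrow> indep Y \<Longrightarrow> card X < card Y \<Longrightarrow> \<exists>y\<in>Y - X. indep (insert y X)"
  using matroid unfolding matroid_def by blast+

lemma finite_indep: "indep X \<Longrightarrow> finite X"
  using indep_subset_ground finite_ground finite_subset by blast

lemma finite_indep_subsets: "finite {I. I \<subseteq> A \<and> indep I}"
  by (rule finite_subset[of _ "Pow E"]) (use indep_subset_ground finite_ground in auto)

lemma card_le_mrank: "I \<subseteq> A \<Longrightarrow> indep I \<Longrightarrow> card I \<le> mrank indep A"
  unfolding mrank_def using finite_indep_subsets[of A] by (intro Max_ge) auto

lemma mrank_attained:
  obtains I where "I \<subseteq> A" "indep I" "card I = mrank indep A"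
proof -
  have "{} \<in> {I. I \<subseteq> A \<and> indep I}" using indep_empty by simp
  then have "mrank indep A \<in> card ` {I. I \<subseteq> A \<and> indep I}"
    unfolding mrank_def using finite_indep_subsets[of A] by (intro Max_in) auto
  then obtain I where "I \<subseteq> A" "indep I" "mrank indep A = card I" by auto
  then show ?thesis using that by simp
qed

lemma mrank_le_card:
  assumes "finite A"
  shows "mrank indep A \<le> card A"
proof -
  obtain I where "I \<subseteq> A" "card I = mrank indep A" by (rule mrank_attained)
  then show ?thesis using card_mono[OF assms] by metis
qed

text \<open>A largest independent extension of \<open>J\<close> inside \<open>A\<close> is a basis of \<open>A\<close>: otherwise
  augmenting it from a basis would give a larger one.\<close>
lemma indep_extend_to_basis:
  assumes "J \<subseteq> A" "indep J"
  obtains B where "J \<subseteq> B" "B \<subseteq> A" "indep B" "card B = mrank indep A"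
proof -
  define C where "C = {B. J \<subseteq> B \<and> B \<subseteq> A \<and> indep B}"
  have "finite C"
    unfolding C_def by (rule finite_subset[OF _ finite_indep_subsets[of A]]) blast
  moreover have "J \<in> C" unfolding C_def using assms by blast
  ultimately have "Max (card ` C) \<in> card ` C" by (intro Max_in finite_imageI) blast+
  then obtain B where "B \<in> C" and card_B: "Max (card ` C) = card B" by blast
  have B_max: "card B' \<le> card B" if "B' \<in> C" for B'
    unfolding card_B[symmetric] using \<open>finite C\<close> that by simp
  have B: "J \<subseteq> B" "B \<subseteq> A" "indep B" using \<open>B \<in> C\<close> unfolding C_def by auto
  obtain K where K: "K \<subseteq> A" "indep K" "card K = mrank indep A" by (rule mrank_attained)
  have "\<not> card B < card K"
  proof
    assume "card B < card K"
    then obtain y where y: "y \<in> K - B" "indep (insert y B)"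
      using indep_augment B(3) K(2) by blast
    then have "insert y B \<in> C" unfolding C_def using B K(1) by blast
    then show False using B_max y finite_indep[OF B(3)] by fastforce
  qed
  moreover have "card B \<le> mrank indep A" using B card_le_mrank by blast
  ultimately show ?thesis using that B K(3) by simp
qed

lemma mrank_insert_le_mono:
  assumes spans: "mrank indep (insert e A) \<le> mrank indep A" and "A \<subseteq> X"
  shows "mrank indep (insert e X) \<le> mrank indep X"
proof (rule ccontr)
  assume rank_grows: "\<not> mrank indep (insert e X) \<le> mrank indep X"
  obtain I where I: "I \<subseteq> A" "indep I" "card I = mrank indep A" by (rule mrank_attained)
  obtain J where J: "I \<subseteq> J" "J \<subseteq> X" "indep J" "card J = mrank indep X"
    using I(1,2) \<open>A \<subseteq> X\<close> by (metis indep_extend_to_basis order_trans)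
  obtain K where K: "K \<subseteq> insert e X" "indep K" "card K = mrank indep (insert e X)"
    by (rule mrank_attained)
  have "card J < card K" using rank_grows J(4) K(3) by simp
  then obtain y where y: "y \<in> K - J" "indep (insert y J)"
    using indep_augment J(3) K(2) by blast
  have fin_J: "finite J" using finite_indep[OF J(3)] .
  show False
  proof (cases "y \<in> X")
    case True
    then have "card (insert y J) \<le> mrank indep X"
      using J(2) y(2) by (intro card_le_mrank) auto
    then show False using y fin_J J(4) by simp
  next
    case False
    then have "y = e" using y K(1) by auto
    have "insert e I \<subseteq> insert y J" using J(1) \<open>y = e\<close> by blast
    then have "indep (insert e I)" by (rule indep_subset[OF y(2)])
    then have "card (insert e I) \<le> mrank indep (insert e A)"
      using I(1) by (intro card_le_mrank) auto
    moreover have "e \<notin> I" using y J(1) \<open>y = e\<close> by blast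
    moreover have "finite I" using finite_subset[OF J(1) fin_J] .
    ultimately show False using spans I(3) by simp
  qed
qed

lemma mrank_insert_le_if_cycle:
  assumes "is_cycle indep S" "e \<in> S" "S \<subseteq> insert e X"
  shows "mrank indep (insert e X) \<le> mrank indep X"
proof (rule mrank_insert_le_mono)
  show "mrank indep (insert e (S - {e})) \<le> mrank indep (S - {e})"
    using assms(1,2) unfolding is_cycle_def by (simp add: insert_absorb)
  show "S - {e} \<subseteq> X" using assms(3) by blast
qed

lemma mrank_append_cycles_le:
  assumes "\<And>i. i < length es \<Longrightarrow>
    \<exists>S. is_cycle indep S \<and> es ! i \<in> S \<and> S \<subseteq> H \<union> set (take (Suc i) es)"
  shows "mrank indep (H \<union> set es) \<le> mrank indep H"
proof -
  have "mrank indep (H \<union> set (take i es)) \<le> mrank indep H" if "i \<le> length es" for i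
    using that
  proof (induction i)
    case 0
    then show ?case by simp
  next
    case (Suc i)
    then have "i < length es" by simp
    then have take_Suc: "H \<union> set (take (Suc i) es) = insert (es ! i) (H \<union> set (take i es))"
      by (auto simp: take_Suc_conv_app_nth)
    obtain S where "is_cycle indep S" "es ! i \<in> S" "S \<subseteq> H \<union> set (take (Suc i) es)"
      using assms \<open>i < length es\<close> by blast
    then have "mrank indep (H \<union> set (take (Suc i) es)) \<le> mrank indep (H \<union> set (take i es))"
      unfolding take_Suc by (rule mrank_insert_le_if_cycle)
    with Suc show ?case by simp
  qed
  from this[of "length es"] show ?thesis by simp
qed

end

lemma matroid_trivial: "matroid E (\<lambda>X. X = {})"
  unfolding matroid_def by simp

lemma copy_edges_in_spanning_subgraph:
  assumes "copy_edges F (G\<lparr>edges := H\<rparr>) S" "H \<subseteq> edges G"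
  shows "copy_edges F G S"
proof -
  obtain \<phi> \<psi> where "inj_on \<phi> (verts F)" "\<phi> ` verts F \<subseteq> verts G"
      "inj_on \<psi> (edges F)" "\<psi> ` edges F = S" "S \<subseteq> H"
      "\<forall>f\<in>edges F. ends G (\<psi> f) = \<phi> ` ends F f"
    using assms(1) unfolding copy_edges_def by auto
  then show ?thesis unfolding copy_edges_def using assms(2) by blast
qed

lemma weakly_sat_all_edges: "weakly_sat G \<F> (edges G)"
  unfolding weakly_sat_def by (intro conjI exI[of _ "[]"]) auto

lemma wsat_attained:
  assumes "finite (edges G)"
  obtains H where "weakly_sat G \<F> H" "card H = wsat G \<F>"
proof -
  have "{H. weakly_sat G \<F> H} \<subseteq> Pow (edges G)" unfolding weakly_sat_def by blast
  then have "finite {H. weakly_sat G \<F> H}" using assms finite_subset by blast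
  then have "wsat G \<F> \<in> card ` {H. weakly_sat G \<F> H}"
    unfolding wsat_def using weakly_sat_all_edges by (intro Min_in) auto
  then obtain H where "weakly_sat G \<F> H" "wsat G \<F> = card H" by blast
  then show ?thesis using that by simp
qed

lemma rk_sat_le:
  fixes G :: "('v, 'e) mgraph"
  assumes "finite (edges G)"
    and "\<And>indep. weakly_sat_matroid G \<F> indep \<Longrightarrow> mrank indep (edges G) \<le> n"
  shows "rk_sat G \<F> \<le> n"
proof -
  let ?R = "{mrank indep (edges G) | indep. weakly_sat_matroid G \<F> indep}"
  interpret trivial: finite_matroid "edges G" "\<lambda>X. X = {}"
    by (rule finite_matroid.intro[OF matroid_trivial assms(1)])
  have "mrank (\<lambda>X. X = {}) A = 0" for A :: "'e set"
  proof -
    obtain I where "I \<subseteq> A" "I = {}" "card I = mrank (\<lambda>X. X = {}) A"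
      by (rule trivial.mrank_attained[of A])
    then show ?thesis by simp
  qed
  then have "weakly_sat_matroid G \<F> (\<lambda>X. X = {})"
    unfolding weakly_sat_matroid_def is_cycle_def using matroid_trivial by simp
  then have "?R \<noteq> {}" by blast
  moreover have "?R \<subseteq> {..n}" using assms(2) by auto
  then have "finite ?R" using finite_subset by blast
  ultimately show ?thesis
    unfolding rk_sat_def using \<open>?R \<subseteq> {..n}\<close> by (intro Max.boundedI) auto
qed

lemma mrank_le_card_weakly_sat:
  assumes "finite (edges G)" "weakly_sat G \<F> H" "weakly_sat_matroid G \<F> indep"
  shows "mrank indep (edges G) \<le> card H"
proof -
  interpret finite_matroid "edges G" indep
    using assms(1,3) unfolding weakly_sat_matroid_def by unfold_locales auto
  obtain es where es: "H \<subseteq> edges G" "set es = edges G - H"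
    "\<And>i. i < length es \<Longrightarrow> \<exists>F\<in>\<F>. \<exists>S.
       copy_edges F (G\<lparr>edges := H \<union> set (take (Suc i) es)\<rparr>) S \<and> es ! i \<in> S"
    using assms(2) unfolding weakly_sat_def by blast
  have "mrank indep (H \<union> set es) \<le> mrank indep H"
  proof (rule mrank_append_cycles_le)
    fix i assume "i < length es"
    then obtain F S where "F \<in> \<F>" "es ! i \<in> S"
      and copy: "copy_edges F (G\<lparr>edges := H \<union> set (take (Suc i) es)\<rparr>) S"
      using es(3) by blast
    moreover have "H \<union> set (take (Suc i) es) \<subseteq> edges G"
      using es(1,2) set_take_subset by fastforce
    ultimately have "is_cycle indep S"
      using assms(3) copy_edges_in_spanning_subgraph unfolding weakly_sat_matroid_def by blast
    moreover have "S \<subseteq> H \<union> set (take (Suc i) es)" using copy unfolding copy_edges_def by auto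
    ultimately show "\<exists>S. is_cycle indep S \<and> es ! i \<in> S \<and> S \<subseteq> H \<union> set (take (Suc i) es)"
      using \<open>es ! i \<in> S\<close> by blast
  qed
  also have "\<dots> \<le> card H" using mrank_le_card es(1) assms(1) finite_subset by blast
  finally show ?thesis using es(1,2) by (simp add: Un_absorb1)
qed

theorem lemma2:
  fixes G :: "('v, 'e) mgraph" and \<F> :: "('u, 'f) mgraph set"
  assumes "multigraph G" and "\<forall>F\<in>\<F>. multigraph F"
  shows "wsat G \<F> \<ge> rk_sat G \<F>"
proof -
  have fin: "finite (edges G)" using assms(1) unfolding multigraph_def by simp
  obtain H where H: "weakly_sat G \<F> H" and "card H = wsat G \<F>"
    using wsat_attained[OF fin] .
  have "rk_sat G \<F> \<le> card H"
    by (rule rk_sat_le[OF fin mrank_le_card_weakly_sat[OF fin H]])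
  with \<open>card H = wsat G \<F>\<close> show ?thesis by simp
qed

end
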